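(* Let $\mathcal{B}\subseteq\{1,2\}^3$ be a basic set, $X^{\mathcal{B}}$ the associated $S_2$-SFT and $F=\{F^{(a)},F^{(b)}\}$ its SNRE with sequences $(a_n),(b_n)$. Then $F$ is of one of the following four types: (1) equal growth type; (2) dominating type; (3) oscillating type; (4) cooperating type.
   Context: $S_2$ is the free semigroup on two generators, identified with finite words over $\{1,2\}$ (root $\epsilon$); alphabet $\{1,2\}$. A basic set $\mathcal{B}\subseteq\{1,2\}^3$ is a set of admissible 2-blocks $(i,i_1,i_2)$ and $X^{\mathcal{B}}$ the associated $S_2$-SFT. Its SNRE is $F^{(a)}(x,y)=\sum_{(1,i,j)\in\mathcal{B}}z_iz_j$, $F^{(b)}(x,y)=\sum_{(2,i,j)\in\mathcal{B}}z_iz_j$ ($z_1=x,z_2=y$), with $a_0=b_0=1$, $a_n=F^{(a)}(a_{n-1},b_{n-1})$, $b_n=F^{(b)}(a_{n-1},b_{n-1})$ for $n\ge1$ ($a_n$, $b_n$ are the numbers of admissible $n$-blocks with root colored $1$, resp. $2$). Types: equal growth: $a_n=b_n$ for all $n\ge1$. Dominating: either $a_n\ge b_n$ for all $n\ge1$ or $b_n\ge a_n$ for all $n\ge 1$. Oscillating: there are two infinite subsequences of $\mathbb{N}$ such that $a_n\ge b_n$ along the first and $a_n<b_n$ along the second. Cooperating: with $c_n=a_n+b_n$, one has $c_n=c_{n-1}^2+g_{n-1}$ for all $n\ge2$, where $g_m=G(a_m,b_m)$ for a polynomial $G$ with nonnegative integer coefficients and $g_m\le c_m^2$ for all $m$.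 *)

theory Defs
  imports Main
begin

definition basic_set :: "(nat \<times> nat \<times> nat) set \<Rightarrow> bool" where
  "basic_set B \<longleftrightarrow> B \<subseteq> {1,2} \<times> {1,2} \<times> {1,2}"

definition zvar :: "nat \<Rightarrow> nat \<Rightarrow> nat \<Rightarrow> nat" where
  "zvar x y i = (if i = 1 then x else y)"

text \<open>F^(k)(x,y) = sum over (k,i,j) in B of z_i z_j  (k = 1 gives F^(a), k = 2 gives F^(b))\<close>
definition snre :: "(nat \<times> nat \<times> nat) set \<Rightarrow> nat \<Rightarrow> nat \<Rightarrow> nat \<Rightarrow> nat" where
  "snre B k x y = (\<Sum>i\<in>{1,2::nat}. \<Sum>j\<in>{1,2::nat}.
                     if (k, i, j) \<in> B then zvar x y i * zvar x y j else 0)"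

fun ab_seq :: "(nat \<times> nat \<times> nat) set \<Rightarrow> nat \<Rightarrow> nat \<times> nat" where
  "ab_seq B 0 = (1, 1)"
| "ab_seq B (Suc n) = (case ab_seq B n of (a, b) \<Rightarrow> (snre B 1 a b, snre B 2 a b))"

definition a_seq :: "(nat \<times> nat \<times> nat) set \<Rightarrow> nat \<Rightarrow> nat" where
  "a_seq B n = fst (ab_seq B n)"

definition b_seq :: "(nat \<times> nat \<times> nat) set \<Rightarrow> nat \<Rightarrow> nat" where
  "b_seq B n = snd (ab_seq B n)"

definition c_seq :: "(nat \<times> nat \<times> nat) set \<Rightarrow> nat \<Rightarrow> nat" where
  "c_seq B n = a_seq B n + b_seq B n"

definition equal_growth_type :: "(nat \<times> nat \<times> nat) set \<Rightarrow> bool" where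
  "equal_growth_type B \<longleftrightarrow> (\<forall>n\<ge>1. a_seq B n = b_seq B n)"

definition dominating_type :: "(nat \<times> nat \<times> nat) set \<Rightarrow> bool" where
  "dominating_type B \<longleftrightarrow> (\<forall>n\<ge>1. a_seq B n \<ge> b_seq B n) \<or> (\<forall>n\<ge>1. b_seq B n \<ge> a_seq B n)"

definition oscillating_type :: "(nat \<times> nat \<times> nat) set \<Rightarrow> bool" where
  "oscillating_type B \<longleftrightarrow> infinite {n. a_seq B n \<ge> b_seq B n} \<and> infinite {n. a_seq B n < b_seq B n}"

definition poly2 :: "(nat \<Rightarrow> nat \<Rightarrow> nat) \<Rightarrow> nat \<Rightarrow> nat \<Rightarrow> nat \<Rightarrow> nat" where
  "poly2 coef N x y = (\<Sum>i\<le>N. \<Sum>j\<le>N. coef i j * x ^ i * y ^ j)"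

definition cooperating_type :: "(nat \<times> nat \<times> nat) set \<Rightarrow> bool" where
  "cooperating_type B \<longleftrightarrow> (\<exists>coef N.
     (\<forall>n\<ge>2. c_seq B n = (c_seq B (n-1))^2 + poly2 coef N (a_seq B (n-1)) (b_seq B (n-1))) \<and>
     (\<forall>m. poly2 coef N (a_seq B m) (b_seq B m) \<le> (c_seq B m)^2))"

end

theory Submission
  imports Defs "HOL-Library.Infinite_Set"
begin

(* Both F^(a) and F^(b) are quadratic forms p x^2 + q x y + r y^2 with p, r <= 1 and q <= 2.
   If their coefficient sums agree, a_n = b_n by induction.  If the partial sums p, p + q,
   p + q + r of one form dominate those of the other, Abel summation shows that this form is
   larger on the cone y <= x, so the corresponding colour dominates forever.  Of the 144 pairs
   of forms only ten escape these tests, five up to exchanging the colours.  Three of them keep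
   the ratio b_n / a_n in an interval [1, c] and are dominating; the other two,
   F^(a) = y^2 and F^(b) = x^2 + q x y, map the cone (1 + q) a <= b into b < a and back, so
   they oscillate strictly. *)

fun qform :: "nat \<times> nat \<times> nat \<Rightarrow> nat \<Rightarrow> nat \<Rightarrow> nat" where
  "qform (p, q, r) x y = p * x * x + q * x * y + r * y * y"

fun coeff_sum :: "nat \<times> nat \<times> nat \<Rightarrow> nat" where
  "coeff_sum (p, q, r) = p + q + r"

fun mirror_coeffs :: "nat \<times> nat \<times> nat \<Rightarrow> nat \<times> nat \<times> nat" where
  "mirror_coeffs (p, q, r) = (r, q, p)"

fun dominates :: "nat \<times> nat \<times> nat \<Rightarrow> nat \<times> nat \<times> nat \<Rightarrow> bool" where
  "dominates (p, q, r) (p', q', r') \<longleftrightarrow> p' \<le> p \<and> p' + q' \<le> p + q \<and> p' + q' + r' \<le> p + q + r"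

lemma qform_diag: "qform P x x = coeff_sum P * x * x"
  by (cases P) (simp add: algebra_simps)

lemma qform_mirror: "qform (mirror_coeffs P) x y = qform P y x"
  by (cases P) (simp add: algebra_simps)

lemma qform_le_qform_if_dominates:
  assumes "dominates P Q" and "y \<le> x"
  shows "qform Q x y \<le> qform P x y"
proof -
  obtain p q r p' q' r' where PQ: "P = (p, q, r)" "Q = (p', q', r')" by (cases P, cases Q) auto
  obtain u v where uv: "x * x = x * y + u" "x * y = y * y + v"
    using \<open>y \<le> x\<close> by (metis le_iff_add mult_le_mono1 mult_le_mono2)
  have abel: "qform (s, t, w) x y = s * u + (s + t) * v + (s + t + w) * (y * y)" for s t w
    by (simp add: uv algebra_simps)
  show ?thesis unfolding PQ abel
    by (rule add_mono[OF add_mono, OF mult_le_mono1 mult_le_mono1 mult_le_mono1])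
      (use assms(1) PQ in simp_all)
qed

definition coeffs :: "(nat \<times> nat \<times> nat) set \<Rightarrow> nat \<Rightarrow> nat \<times> nat \<times> nat" where
  "coeffs B k = (of_bool ((k, 1, 1) \<in> B), of_bool ((k, 1, 2) \<in> B) + of_bool ((k, 2, 1) \<in> B),
     of_bool ((k, 2, 2) \<in> B))"

lemma coeffs_range: "coeffs B k \<in> {0, 1} \<times> {0, 1, 2} \<times> {0, 1}"
  by (simp add: coeffs_def)

lemma snre_eq_qform: "snre B k x y = qform (coeffs B k) x y"
  by (simp add: snre_def zvar_def coeffs_def algebra_simps)

lemma a_seq_0 [simp]: "a_seq B 0 = 1" and b_seq_0 [simp]: "b_seq B 0 = 1"
  by (simp_all add: a_seq_def b_seq_def)

lemma a_seq_Suc: "a_seq B (Suc n) = qform (coeffs B 1) (a_seq B n) (b_seq B n)"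
  and b_seq_Suc: "b_seq B (Suc n) = qform (coeffs B 2) (a_seq B n) (b_seq B n)"
  by (simp_all add: a_seq_def b_seq_def snre_eq_qform split: prod.split)

lemma ab_seq_invariant:
  assumes "I 1 1" and "\<And>a b. I a b \<Longrightarrow> I (qform (coeffs B 1) a b) (qform (coeffs B 2) a b)"
  shows "I (a_seq B n) (b_seq B n)"
proof (induction n)
  case 0
  then show ?case using assms(1) by simp
next
  case (Suc n)
  then show ?case unfolding a_seq_Suc b_seq_Suc by (rule assms(2))
qed

lemma ab_seq_alternating:
  assumes "I (a_seq B m) (b_seq B m)"
    and "\<And>a b. I a b \<Longrightarrow> J (qform (coeffs B 1) a b) (qform (coeffs B 2) a b)"
    and "\<And>a b. J a b \<Longrightarrow> I (qform (coeffs B 1) a b) (qform (coeffs B 2) a b)"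
  shows "I (a_seq B (m + 2 * k)) (b_seq B (m + 2 * k))"
proof (induction k)
  case 0
  then show ?case using assms(1) by simp
next
  case (Suc k)
  have two_steps: "m + 2 * Suc k = Suc (Suc (m + 2 * k))" by simp
  show ?case unfolding two_steps a_seq_Suc b_seq_Suc by (intro assms(2,3) Suc)
qed

lemma infinite_if_arith_progression:
  fixes m :: nat
  assumes "\<And>k. P (m + 2 * k)"
  shows "infinite {n. P n}"
  unfolding infinite_nat_iff_unbounded_le
proof
  fix j
  show "\<exists>n\<ge>j. n \<in> {n. P n}" using assms[of j] by (intro exI[of _ "m + 2 * j"]) auto
qed

lemma oscillating_typeI:
  assumes "infinite {n. a_seq B n < b_seq B n}" and "infinite {n. b_seq B n < a_seq B n}"
  shows "oscillating_type B"
proof -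
  have "{n. b_seq B n < a_seq B n} \<subseteq> {n. b_seq B n \<le> a_seq B n}" by auto
  then show ?thesis using assms infinite_super unfolding oscillating_type_def by blast
qed

lemma equal_growth_if_coeff_sums_eq:
  assumes "coeff_sum (coeffs B 1) = coeff_sum (coeffs B 2)"
  shows "equal_growth_type B"
  using ab_seq_invariant[where I = "(=)"] assms
  unfolding equal_growth_type_def by (simp add: qform_diag)

lemma b_seq_le_a_seq_if_dominates:
  assumes "dominates (coeffs B 1) (coeffs B 2)"
  shows "b_seq B n \<le> a_seq B n"
  by (rule ab_seq_invariant[where I = "\<lambda>a b. b \<le> a"]) (use assms qform_le_qform_if_dominates in auto)

lemma a_seq_le_b_seq_if_ratio_bounded:
  assumes "l \<le> k"
    and "\<And>a b. a \<le> b \<Longrightarrow> l * b \<le> k * a \<Longrightarrow>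
      qform (coeffs B 1) a b \<le> qform (coeffs B 2) a b \<and>
      l * qform (coeffs B 2) a b \<le> k * qform (coeffs B 1) a b"
  shows "a_seq B n \<le> b_seq B n"
proof -
  have "a_seq B n \<le> b_seq B n \<and> l * b_seq B n \<le> k * a_seq B n"
    by (rule ab_seq_invariant[where I = "\<lambda>a b. a \<le> b \<and> l * b \<le> k * a"]) (use assms in auto)
  then show ?thesis ..
qed

lemma a_seq_le_b_seq_if_bounded_ratio_coeffs:
  assumes "(coeffs B 1, coeffs B 2) \<in> {((0, 0, 1), (0, 2, 0)), ((1, 0, 1), (1, 2, 0)), ((0, 1, 1), (1, 2, 0))}"
  shows "a_seq B n \<le> b_seq B n"
proof -
  have mono_products: "a * a \<le> a * b" "a * b \<le> b * b" if "a \<le> b" for a b :: nat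
    using that by simp_all
  consider "coeffs B 1 = (0, 0, 1)" "coeffs B 2 = (0, 2, 0)"
    | "coeffs B 1 = (1, 0, 1)" "coeffs B 2 = (1, 2, 0)"
    | "coeffs B 1 = (0, 1, 1)" "coeffs B 2 = (1, 2, 0)"
    using assms by auto
  then show ?thesis
  proof cases
    case 1
    show ?thesis
    proof (rule a_seq_le_b_seq_if_ratio_bounded[of 1 2])
      fix a b :: nat
      assume "a \<le> b" "1 * b \<le> 2 * a"
      then have "b * b \<le> 2 * (a * b)" using mult_le_mono1 by (fastforce simp flip: mult.assoc)
      with mono_products[OF \<open>a \<le> b\<close>] show "qform (coeffs B 1) a b \<le> qform (coeffs B 2) a b \<and>
        1 * qform (coeffs B 2) a b \<le> 2 * qform (coeffs B 1) a b"
        unfolding 1 qform.simps mult.assoc distrib_left by (intro conjI) linarith+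
    qed simp
  next
    case 2
    show ?thesis
    proof (rule a_seq_le_b_seq_if_ratio_bounded[of 1 2])
      fix a b :: nat
      assume "a \<le> b" "1 * b \<le> 2 * a"
      then have "b * b \<le> 2 * (a * b)" using mult_le_mono1 by (fastforce simp flip: mult.assoc)
      with mono_products[OF \<open>a \<le> b\<close>] show "qform (coeffs B 1) a b \<le> qform (coeffs B 2) a b \<and>
        1 * qform (coeffs B 2) a b \<le> 2 * qform (coeffs B 1) a b"
        unfolding 2 qform.simps mult.assoc distrib_left by (intro conjI) linarith+
    qed simp
  next
    case 3
    show ?thesis
    proof (rule a_seq_le_b_seq_if_ratio_bounded[of 2 3])
      fix a b :: nat
      assume "a \<le> b" "2 * b \<le> 3 * a"
      then have "2 * (b * b) \<le> 3 * (a * b)" "a * b \<le> 2 * (a * a)"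
        using mult_le_mono1 by (fastforce simp flip: mult.assoc)+
      with mono_products[OF \<open>a \<le> b\<close>] show "qform (coeffs B 1) a b \<le> qform (coeffs B 2) a b \<and>
        2 * qform (coeffs B 2) a b \<le> 3 * qform (coeffs B 1) a b"
        unfolding 3 qform.simps mult.assoc distrib_left by (intro conjI) linarith+
    qed simp
  qed
qed

lemma strictly_oscillating_if_coeffs:
  assumes P: "coeffs B 1 = (0, 0, 1)" and Q: "coeffs B 2 = (1, q, 0)" and "1 \<le> q"
  shows "infinite {n. a_seq B n < b_seq B n} \<and> infinite {n. b_seq B n < a_seq B n}"
proof -
  define I where "I a b \<longleftrightarrow> (1 + q) * a \<le> b \<and> a < b" for a b :: nat
  define J where "J a b \<longleftrightarrow> b < a" for a b :: nat
  have step: "qform (coeffs B 1) a b = b * b" "qform (coeffs B 2) a b = a * a + q * (a * b)"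
    for a b :: nat using P Q by simp_all
  have I_J: "J (qform (coeffs B 1) a b) (qform (coeffs B 2) a b)" if "I a b" for a b
  proof -
    have "a < b" using that unfolding I_def ..
    have "(1 + q) * (a * a + q * (a * b)) = a * ((1 + q) * a) + q * b * ((1 + q) * a)"
      by (simp add: algebra_simps)
    also have "\<dots> \<le> a * b + q * b * b"
      using that unfolding I_def by (intro add_mono mult_le_mono2) auto
    also have "\<dots> < (1 + q) * (b * b)"
      using \<open>a < b\<close> by (simp add: algebra_simps)
    finally show ?thesis unfolding J_def step using mult_less_cancel1 by blast
  qed
  have J_I: "I (qform (coeffs B 1) a b) (qform (coeffs B 2) a b)" if "J a b" for a b
  proof -
    have "b * b < a * a" "b * b \<le> a * b" using that unfolding J_def by (simp_all add: mult_strict_mono)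
    then show ?thesis unfolding I_def step by (simp add: algebra_simps add_mono add_less_le_mono)
  qed
  have "I (a_seq B 1) (b_seq B 1)"
    using a_seq_Suc[of B 0] b_seq_Suc[of B 0] \<open>1 \<le> q\<close> unfolding I_def step by simp
  then have I_odd: "I (a_seq B (1 + 2 * k)) (b_seq B (1 + 2 * k))" for k
    by (rule ab_seq_alternating) (use I_J J_I in auto)
  have "infinite {n. a_seq B n < b_seq B n}"
    by (rule infinite_if_arith_progression[of _ 1]) (use I_odd in \<open>simp add: I_def\<close>)
  moreover have "infinite {n. b_seq B n < a_seq B n}"
  proof (rule infinite_if_arith_progression[of _ 2])
    fix k
    show "b_seq B (2 + 2 * k) < a_seq B (2 + 2 * k)"
      using I_J[OF I_odd[of k]] a_seq_Suc[of B "1 + 2 * k"] b_seq_Suc[of B "1 + 2 * k"]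
      unfolding J_def by simp
  qed
  ultimately show ?thesis ..
qed

definition exceptional_coeffs :: "((nat \<times> nat \<times> nat) \<times> (nat \<times> nat \<times> nat)) set" where
  "exceptional_coeffs = {((0, 0, 1), (0, 2, 0)), ((1, 0, 1), (1, 2, 0)), ((0, 1, 1), (1, 2, 0)),
     ((0, 0, 1), (1, 1, 0)), ((0, 0, 1), (1, 2, 0))}"

lemma coeff_pair_classification:
  assumes "P \<in> {0, 1} \<times> {0, 1, 2} \<times> {0, 1}" and "Q \<in> {0, 1} \<times> {0, 1, 2} \<times> {0, 1}"
  shows "coeff_sum P = coeff_sum Q \<or> dominates P Q \<or> (P, Q) \<in> exceptional_coeffs
    \<or> dominates (mirror_coeffs Q) (mirror_coeffs P)
    \<or> (mirror_coeffs Q, mirror_coeffs P) \<in> exceptional_coeffs"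
proof -
  obtain p q r p' q' r' where PQ: "P = (p, q, r)" "Q = (p', q', r')" by (cases P, cases Q) auto
  have "p = 0 \<or> p = 1" "q = 0 \<or> q = 1 \<or> q = 2" "r = 0 \<or> r = 1"
       "p' = 0 \<or> p' = 1" "q' = 0 \<or> q' = 1 \<or> q' = 2" "r' = 0 \<or> r' = 1"
    using assms unfolding PQ by auto
  then show ?thesis unfolding PQ exceptional_coeffs_def by (elim disjE) simp_all
qed

lemma dominating_or_strictly_oscillating:
  assumes "dominates (coeffs B 1) (coeffs B 2) \<or> (coeffs B 1, coeffs B 2) \<in> exceptional_coeffs"
  shows "dominating_type B \<or> infinite {n. a_seq B n < b_seq B n} \<and> infinite {n. b_seq B n < a_seq B n}"
proof -
  consider "dominates (coeffs B 1) (coeffs B 2)"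
    | "(coeffs B 1, coeffs B 2) \<in> {((0, 0, 1), (0, 2, 0)), ((1, 0, 1), (1, 2, 0)), ((0, 1, 1), (1, 2, 0))}"
    | "coeffs B 1 = (0, 0, 1)" "coeffs B 2 = (1, 1, 0)"
    | "coeffs B 1 = (0, 0, 1)" "coeffs B 2 = (1, 2, 0)"
    using assms unfolding exceptional_coeffs_def by (auto simp del: One_nat_def)
  then show ?thesis
  proof cases
    case 1
    then show ?thesis unfolding dominating_type_def using b_seq_le_a_seq_if_dominates by blast
  next
    case 2
    then show ?thesis unfolding dominating_type_def using a_seq_le_b_seq_if_bounded_ratio_coeffs by blast
  next
    case 3
    then show ?thesis using strictly_oscillating_if_coeffs[of B 1] by simp
  next
    case 4
    then show ?thesis using strictly_oscillating_if_coeffs[of B 2] by simp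
  qed
qed

(* On {1,2}^3 this exchanges the colours 1 and 2; other triples never influence the SNRE. *)
definition colour_swap :: "(nat \<times> nat \<times> nat) set \<Rightarrow> (nat \<times> nat \<times> nat) set" where
  "colour_swap B = {(i, j, k). (3 - i, 3 - j, 3 - k) \<in> B}"

lemma coeffs_colour_swap:
  "coeffs (colour_swap B) 1 = mirror_coeffs (coeffs B 2)"
  "coeffs (colour_swap B) 2 = mirror_coeffs (coeffs B 1)"
  by (simp_all add: coeffs_def colour_swap_def)

lemma ab_seq_colour_swap: "a_seq (colour_swap B) n = b_seq B n \<and> b_seq (colour_swap B) n = a_seq B n"
  by (induction n) (simp_all add: a_seq_Suc b_seq_Suc coeffs_colour_swap qform_mirror del: One_nat_def)

lemma dominating_type_colour_swap: "dominating_type (colour_swap B) \<longleftrightarrow> dominating_type B"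
  by (auto simp: dominating_type_def ab_seq_colour_swap)

lemma dominating_or_strictly_oscillating_mirrored:
  assumes "dominates (mirror_coeffs (coeffs B 2)) (mirror_coeffs (coeffs B 1))
    \<or> (mirror_coeffs (coeffs B 2), mirror_coeffs (coeffs B 1)) \<in> exceptional_coeffs"
  shows "dominating_type B \<or> infinite {n. a_seq B n < b_seq B n} \<and> infinite {n. b_seq B n < a_seq B n}"
proof -
  have "dominating_type (colour_swap B) \<or> infinite {n. a_seq (colour_swap B) n < b_seq (colour_swap B) n}
    \<and> infinite {n. b_seq (colour_swap B) n < a_seq (colour_swap B) n}"
    by (rule dominating_or_strictly_oscillating) (simp only: coeffs_colour_swap assms)
  then show ?thesis by (simp only: dominating_type_colour_swap ab_seq_colour_swap) blast
qed

theorem theorem3: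
  fixes B :: "(nat \<times> nat \<times> nat) set"
  assumes "basic_set B"
  shows "equal_growth_type B \<or> dominating_type B \<or> oscillating_type B \<or> cooperating_type B"
  (* The SNRE only reads triples in {1,2}^3. *)
proof (cases "coeff_sum (coeffs B 1) = coeff_sum (coeffs B 2)")
  case True
  then show ?thesis using equal_growth_if_coeff_sums_eq by blast
next
  case False
  then have "dominating_type B \<or> infinite {n. a_seq B n < b_seq B n} \<and> infinite {n. b_seq B n < a_seq B n}"
    using coeff_pair_classification[OF coeffs_range coeffs_range, of B 1 B 2]
      dominating_or_strictly_oscillating[of B] dominating_or_strictly_oscillating_mirrored[of B]
    by blast
  then show ?thesis using oscillating_typeI by blast
qed

end
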